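(* Let $R\in(0,\infty]$ and let $u\in C^\infty(B_R^{\mathbb H})$ be radial, $u(x)=v(d(x))$. Then $v\in C^\infty(0,R)$ and, for each $j\in\mathbb N$, \[ v^{(j)}(d(x))=\left(\frac{1-|x|^2}{2}\right)^j\sum_{i_1,\dots,i_j=1}^N(\nabla^ju)_{i_1\cdots i_j}(x)\,\frac{x_{i_1}\cdots x_{i_j}}{|x|^j},\quad\forall x\in B_R^{\mathbb H}\setminus\{0\}. \]
   Context: $\mathbb H^N$ is the Poincaré ball $\{x\in\mathbb R^N:|x|<1\}$ with metric $g_{ij}=\left(\frac{2}{1-|x|^2}\right)^2\delta_{ij}$, and $d(x)=\log\frac{1+|x|}{1-|x|}$; $B_R^{\mathbb H}=\{x:d(x)<R\}$. $\nabla^ju$ is the $j$-th covariant derivative of $u$, a $j$-covariant tensor field with components defined recursively by $(\nabla u)_i=\partial u/\partial x_i$ and, for a $k$-covariant tensor $\eta$, $(\nabla\eta)_{i_1\dots i_{k+1}}=\frac{\partial\eta_{i_2\dots i_{k+1}}}{\partial x_{i_1}}-\sum_{\ell=2}^{k+1}\sum_{\alpha=1}^N\Gamma^\alpha_{i_1i_\ell}\eta_{i_2\dots i_{\ell-1}\alpha i_{\ell+1}\dots i_{k+1}}$, with Christoffel symbols $\Gamma^k_{ij}=\frac{2}{1-|x|^2}(x_i\delta_{jk}+x_j\delta_{ik}-x_k\delta_{ij})$. *)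

theory Defs
  imports "HOL-Analysis.Analysis" "HOL-Library.Extended_Real"
begin

text \<open>C-infinity smoothness on a set (intended for open sets): f is differentiable
  on S and all first partial derivatives are again smooth on S (coinductively).\<close>
coinductive smooth_on :: "'a::euclidean_space set \<Rightarrow> ('a \<Rightarrow> real) \<Rightarrow> bool" for S where
  "f differentiable_on S \<Longrightarrow>
   (\<forall>b\<in>Basis. smooth_on S (\<lambda>x. frechet_derivative f (at x) b)) \<Longrightarrow> smooth_on S f"

text \<open>Hyperbolic distance from the origin in the Poincare ball.\<close>
definition hd :: "real^'n \<Rightarrow> real" where
  "hd x = ln ((1 + norm x) / (1 - norm x))"

definition hball :: "ereal \<Rightarrow> (real^'n) set" where
  "hball R = {x. norm x < 1 \<and> ereal (hd x) < R}"

definition christoffel :: "'n \<Rightarrow> 'n \<Rightarrow> 'n \<Rightarrow> real^'n \<Rightarrow> real" where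
  "christoffel k i j x = 2 / (1 - norm x ^ 2) *
     (x$i * (if j = k then 1 else 0) + x$j * (if i = k then 1 else 0) - x$k * (if i = j then 1 else 0))"

definition cov_deriv :: "(real^'n \<Rightarrow> 'n list \<Rightarrow> real) \<Rightarrow> real^'n \<Rightarrow> 'n list \<Rightarrow> real" where
  "cov_deriv eta x is = (case is of [] \<Rightarrow> 0
     | i1 # rest \<Rightarrow> frechet_derivative (\<lambda>y. eta y rest) (at x) (axis i1 1)
         - (\<Sum>l<length rest. \<Sum>\<alpha>\<in>UNIV. christoffel \<alpha> i1 (rest ! l) x * eta x (rest[l := \<alpha>])))"

fun cov_nabla :: "nat \<Rightarrow> (real^'n \<Rightarrow> real) \<Rightarrow> real^'n \<Rightarrow> 'n list \<Rightarrow> real" where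
  "cov_nabla 0 u = (\<lambda>x is. u x)"
| "cov_nabla (Suc j) u = cov_deriv (cov_nabla j u)"

end

theory Submission
  imports Defs
begin

text \<open>Let \<open>\<gamma>(t) = tanh (t/2) \<theta>\<close>, \<open>|\<theta>| = 1\<close>, be the unit-speed geodesic from the origin, so that
  \<open>v(t) = u(\<gamma>(t))\<close> for \<open>t > 0\<close>. For every tensor field \<open>T\<close> and every geodesic,
  \<open>d/dt T(\<gamma>)(\<gamma>', ..., \<gamma>') = (\<nabla>T)(\<gamma>)(\<gamma>', ..., \<gamma>')\<close>: differentiating the components
  of \<open>\<gamma>'\<close> produces terms in \<open>\<gamma>''\<close>, and by the geodesic equation \<open>\<gamma>'' + \<Gamma>(\<gamma>', \<gamma>') = 0\<close>
  these are exactly the Christoffel terms in the definition of \<open>\<nabla>T\<close>. Hence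
  \<open>F_j(t) = (\<nabla>^j u)(\<gamma>(t))(\<gamma>'(t), ..., \<gamma>'(t))\<close> satisfies \<open>F_0 = v\<close> and \<open>F_j' = F_(j+1)\<close>, so
  \<open>v\<close> is smooth with \<open>v^(j) = F_j\<close>; at \<open>\<gamma>(t) = x\<close> the Euclidean velocity is
  \<open>\<gamma>' = (1 - |x|^2)/2 \<cdot> x/|x|\<close>. The differentiability of \<open>\<nabla>^j u\<close> needed on the way holds
  because it is built from \<open>u\<close> by partial derivatives, sums and products with smooth functions.\<close>

section \<open>Smoothness of the covariant derivatives\<close>

text \<open>Since \<open>smooth_on\<close> is coinductive, its closure under sums and products is proved by
  coinduction over this inductive closure (\<open>smooth_on_if_smooth_closure\<close>); the generators are
  the building blocks of the Christoffel symbols.\<close>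
inductive smooth_closure :: "(real^'n) set \<Rightarrow> (real^'n \<Rightarrow> real) \<Rightarrow> bool" for S where
  smooth: "smooth_on S f \<Longrightarrow> smooth_closure S f"
| const: "smooth_closure S (\<lambda>x. c)"
| coordinate: "smooth_closure S (\<lambda>x. x$i)"
| inverse_one_minus_norm_sq: "smooth_closure S (\<lambda>x. 1 / (1 - norm x ^ 2))"
| add: "smooth_closure S f \<Longrightarrow> smooth_closure S g \<Longrightarrow> smooth_closure S (\<lambda>x. f x + g x)"
| mult: "smooth_closure S f \<Longrightarrow> smooth_closure S g \<Longrightarrow> smooth_closure S (\<lambda>x. f x * g x)"
| cong: "smooth_closure S f \<Longrightarrow> (\<And>x. x \<in> S \<Longrightarrow> f x = g x) \<Longrightarrow> smooth_closure S g"

lemma has_derivative_inverse_one_minus_norm_sq: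
  fixes x :: "'a::real_inner"
  assumes "norm x < 1"
  shows "((\<lambda>x. 1 / (1 - norm x ^ 2)) has_derivative (\<lambda>h. 2 * (x \<bullet> h) / (1 - norm x ^ 2)\<^sup>2)) (at x)"
proof -
  have "1 - x \<bullet> x \<noteq> 0"
    using assms by (metis eq_iff_diff_eq_0 less_irrefl norm_eq_sqrt_inner real_sqrt_one)
  then have "((\<lambda>x. 1 / (1 - x \<bullet> x)) has_derivative (\<lambda>h. 2 * (x \<bullet> h) / (1 - x \<bullet> x)\<^sup>2)) (at x)"
    by (auto intro!: derivative_eq_intros simp: power2_eq_square field_simps inner_commute)
  then show ?thesis
    by (simp add: power2_norm_eq_inner)
qed

lemma frechet_derivative_transform_within_open:
  assumes "f differentiable (at x)" "open S" "x \<in> S" "\<And>y. y \<in> S \<Longrightarrow> f y = g y"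
  shows "g differentiable (at x)" "frechet_derivative g (at x) = frechet_derivative f (at x)"
proof -
  have "(g has_derivative frechet_derivative f (at x)) (at x)"
    using assms frechet_derivative_works has_derivative_transform_within_open by blast
  then show "g differentiable (at x)" "frechet_derivative g (at x) = frechet_derivative f (at x)"
    by (auto intro: differentiableI frechet_derivative_at[symmetric])
qed

abbreviation partials_in_smooth_closure :: "(real^'n) set \<Rightarrow> (real^'n \<Rightarrow> real) \<Rightarrow> bool" where
  "partials_in_smooth_closure S f \<equiv>
     (\<forall>x\<in>S. f differentiable (at x)) \<and>
     (\<forall>i. smooth_closure S (\<lambda>x. frechet_derivative f (at x) (axis i 1)))"

lemma partials_in_smooth_closureI:
  assumes "\<And>x. x \<in> S \<Longrightarrow> (f has_derivative D x) (at x)"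
    and "\<And>i. smooth_closure S (\<lambda>x. D x (axis i 1))"
  shows "partials_in_smooth_closure S f"
proof (intro conjI ballI allI)
  show "f differentiable (at x)" if "x \<in> S" for x
    using assms(1)[OF that] by (rule differentiableI)
  show "smooth_closure S (\<lambda>x. frechet_derivative f (at x) (axis i 1))" for i
    using assms(2)[of i] by (rule smooth_closure.cong) (metis assms(1) frechet_derivative_at)
qed

lemma smooth_closure_partials:
  fixes S :: "(real^'n) set"
  assumes "open S" "S \<subseteq> ball 0 1" "smooth_closure S f"
  shows "partials_in_smooth_closure S f"
  using assms(3)
proof (induction rule: smooth_closure.induct)
  case (smooth f)
  then show ?case
    using assms(1)
    by (cases rule: smooth_on.cases)
      (auto simp: differentiable_on_eq_differentiable_at intro: smooth_closure.smooth)
next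
  case (const c)
  show ?case
    by (rule partials_in_smooth_closureI[where D = "\<lambda>x h. 0"]) (auto intro: smooth_closure.const)
next
  case (coordinate i)
  show ?case
    by (rule partials_in_smooth_closureI[where D = "\<lambda>x h. h$i"])
      (auto intro: bounded_linear_imp_has_derivative bounded_linear_vec_nth smooth_closure.const)
next
  case inverse_one_minus_norm_sq
  let ?w = "\<lambda>x::real^'n. 1 / (1 - norm x ^ 2)"
  show ?case
  proof (rule partials_in_smooth_closureI)
    show "(?w has_derivative (\<lambda>h. 2 * (x \<bullet> h) / (1 - norm x ^ 2)\<^sup>2)) (at x)" if "x \<in> S" for x
      using that assms(2) by (intro has_derivative_inverse_one_minus_norm_sq) auto
    show "smooth_closure S (\<lambda>x. 2 * (x \<bullet> axis i 1) / (1 - norm x ^ 2)\<^sup>2)" for i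
    proof (rule smooth_closure.cong)
      show "smooth_closure S (\<lambda>x. (2 * x$i) * ?w x * ?w x)"
        by (intro smooth_closure.mult smooth_closure.const smooth_closure.coordinate
            smooth_closure.inverse_one_minus_norm_sq)
    qed (simp add: inner_axis power2_eq_square)
  qed
next
  case (add f g)
  then show ?case
    by (intro partials_in_smooth_closureI[where
          D = "\<lambda>x h. frechet_derivative f (at x) h + frechet_derivative g (at x) h"]
        has_derivative_add smooth_closure.add)
      (auto simp: frechet_derivative_works)
next
  case (mult f g)
  then show ?case
    by (intro partials_in_smooth_closureI[where
          D = "\<lambda>x h. f x * frechet_derivative g (at x) h + frechet_derivative f (at x) h * g x"]
        has_derivative_mult smooth_closure.add smooth_closure.mult)
      (auto simp: frechet_derivative_works)
next
  case (cong f g)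
  have g_diff: "g differentiable (at x)"
    and g_deriv: "frechet_derivative g (at x) = frechet_derivative f (at x)" if "x \<in> S" for x
    using frechet_derivative_transform_within_open[OF _ assms(1) that cong.hyps(2)] cong.IH that
    by auto
  show ?case
  proof (intro conjI ballI allI)
    show "g differentiable (at x)" if "x \<in> S" for x
      using g_diff[OF that] .
    show "smooth_closure S (\<lambda>x. frechet_derivative g (at x) (axis i 1))" for i
    proof (rule smooth_closure.cong)
      show "smooth_closure S (\<lambda>x. frechet_derivative f (at x) (axis i 1))"
        using cong.IH by blast
    qed (simp add: g_deriv)
  qed
qed

lemma smooth_on_if_smooth_closure:
  fixes S :: "(real^'n) set"
  assumes "open S" "S \<subseteq> ball 0 1" "smooth_closure S f"
  shows "smooth_on S f"
  using assms(3)
proof (coinduction arbitrary: f)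
  case (smooth_on f)
  then have partials: "partials_in_smooth_closure S f"
    by (rule smooth_closure_partials[OF assms(1,2)])
  have "f differentiable_on S"
    using partials by (simp add: differentiable_at_imp_differentiable_on)
  moreover have "smooth_closure S (\<lambda>x. frechet_derivative f (at x) b)" if b: "b \<in> Basis" for b
  proof -
    obtain i where "b = axis i 1"
      using axis_inverse[OF b] by blast
    then show ?thesis
      using partials by simp
  qed
  ultimately show ?case
    by blast
qed

lemma smooth_closure_diff:
  assumes "smooth_closure S f" "smooth_closure S g"
  shows "smooth_closure S (\<lambda>x. f x - g x)"
proof (rule smooth_closure.cong)
  show "smooth_closure S (\<lambda>x. f x + (-1) * g x)"
    using assms by (intro smooth_closure.add smooth_closure.mult smooth_closure.const)
qed simp

lemma smooth_closure_sum:
  "finite A \<Longrightarrow> (\<And>a. a \<in> A \<Longrightarrow> smooth_closure S (f a)) \<Longrightarrow> smooth_closure S (\<lambda>x. \<Sum>a\<in>A. f a x)"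
  by (induction A rule: finite_induct) (auto intro: smooth_closure.add smooth_closure.const)

lemma smooth_closure_christoffel: "smooth_closure S (christoffel k i j)"
proof (rule smooth_closure.cong)
  show "smooth_closure S (\<lambda>x. (2 * (1 / (1 - norm x ^ 2))) *
      (x$i * (if j = k then 1 else 0) + x$j * (if i = k then 1 else 0)
        - x$k * (if i = j then 1 else 0)))"
    by (intro smooth_closure.mult smooth_closure.add smooth_closure_diff smooth_closure.const
        smooth_closure.coordinate smooth_closure.inverse_one_minus_norm_sq)
qed (simp add: christoffel_def)

lemma smooth_closure_cov_nabla:
  fixes S :: "(real^'n) set"
  assumes "open S" "S \<subseteq> ball 0 1" "smooth_on S u"
  shows "smooth_closure S (\<lambda>x. cov_nabla j u x I)"
proof (induction j arbitrary: I)
  case 0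
  show ?case
    using assms(3) by (simp add: smooth_closure.smooth)
next
  case (Suc j)
  show ?case
  proof (cases I)
    case Nil
    then show ?thesis
      by (simp add: cov_deriv_def smooth_closure.const)
  next
    case (Cons i rest)
    have "smooth_closure S (\<lambda>x. frechet_derivative (\<lambda>y. cov_nabla j u y rest) (at x) (axis i 1))"
      using smooth_closure_partials[OF assms(1,2) Suc.IH] by blast
    then have "smooth_closure S (\<lambda>x. frechet_derivative (\<lambda>y. cov_nabla j u y rest) (at x) (axis i 1)
        - (\<Sum>l<length rest. \<Sum>\<alpha>\<in>UNIV. christoffel \<alpha> i (rest ! l) x * cov_nabla j u x (rest[l := \<alpha>])))"
      by (intro smooth_closure_diff smooth_closure_sum smooth_closure.mult
          smooth_closure_christoffel Suc.IH) simp_all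
    then show ?thesis
      using Cons by (simp add: cov_deriv_def)
  qed
qed

lemma smooth_on_cov_nabla:
  fixes S :: "(real^'n) set"
  assumes "open S" "S \<subseteq> ball 0 1" "smooth_on S u"
  shows "smooth_on S (\<lambda>x. cov_nabla j u x I)"
  using assms smooth_closure_cov_nabla smooth_on_if_smooth_closure by blast

lemma smooth_on_imp_differentiable_at:
  assumes "open S" "smooth_on S f" "x \<in> S"
  shows "f differentiable (at x)"
  using assms by (auto elim: smooth_on.cases simp: differentiable_on_eq_differentiable_at)

section \<open>Smooth functions of one variable\<close>

lemma higher_deriv_eq_if_derivative_chain:
  fixes F :: "nat \<Rightarrow> real \<Rightarrow> real"
  assumes "open U"
    and "\<And>t. t \<in> U \<Longrightarrow> F 0 t = v t"
    and "\<And>j t. t \<in> U \<Longrightarrow> (F j has_real_derivative F (Suc j) t) (at t)"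
    and "t \<in> U"
  shows "(deriv ^^ j) v t = F j t"
  using assms(4)
proof (induction j arbitrary: t)
  case 0
  then show ?case
    using assms(2) by simp
next
  case (Suc j)
  have "((deriv ^^ j) v has_real_derivative F (Suc j) t) (at t)"
    by (rule has_field_derivative_transform_within_open[OF assms(3) assms(1)]) (use Suc in auto)
  then show ?case
    by (simp add: DERIV_imp_deriv)
qed

lemma smooth_on_if_derivative_chain:
  fixes F :: "nat \<Rightarrow> real \<Rightarrow> real"
  assumes "open U"
    and "\<And>t. t \<in> U \<Longrightarrow> F 0 t = v t"
    and "\<And>j t. t \<in> U \<Longrightarrow> (F j has_real_derivative F (Suc j) t) (at t)"
  shows "smooth_on U v"
proof (rule smooth_on.coinduct[where X = "\<lambda>f. \<exists>j. \<forall>t\<in>U. f t = F j t"])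
  show "\<exists>j. \<forall>t\<in>U. v t = F j t"
    using assms(2) by metis
next
  fix f
  assume "\<exists>j. \<forall>t\<in>U. f t = F j t"
  then obtain j where j: "\<And>t. t \<in> U \<Longrightarrow> f t = F j t"
    by blast
  have f': "(f has_real_derivative F (Suc j) t) (at t)" if "t \<in> U" for t
    by (rule has_field_derivative_transform_within_open[OF assms(3) assms(1)]) (use that j in auto)
  then have "f differentiable_on U"
    using assms(1) by (auto simp: differentiable_on_eq_differentiable_at real_differentiable_def)
  moreover have "frechet_derivative f (at t) 1 = F (Suc j) t" if "t \<in> U" for t
    using f'[OF that] by (metis frechet_derivative_at has_field_derivative_def mult.right_neutral)
  ultimately show "\<exists>g. f = g \<and> g differentiable_on U \<and>
      (\<forall>b\<in>Basis. (\<exists>j. \<forall>t\<in>U. frechet_derivative g (at t) b = F j t) \<or>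
        smooth_on U (\<lambda>x. frechet_derivative g (at x) b))"
    by auto
qed

section \<open>Tensor fields along a geodesic\<close>

lemma sum_lists_length_Suc:
  fixes f :: "'a::finite list \<Rightarrow> 'b::comm_monoid_add"
  shows "(\<Sum>J | length J = Suc j. f J) = (\<Sum>a\<in>UNIV. \<Sum>I | length I = j. f (a # I))"
proof -
  have "{J::'a list. length J = Suc j} = (\<lambda>(a, I). a # I) ` (UNIV \<times> {I. length I = j})"
    by (auto simp: image_iff length_Suc_conv)
  moreover have "inj_on (\<lambda>(a, I). a # I) (UNIV \<times> {I::'a list. length I = j})"
    by (auto simp: inj_on_def)
  ultimately have "(\<Sum>J | length J = Suc j. f J) = (\<Sum>(a, I)\<in>UNIV \<times> {I. length I = j}. f (a # I))"
    by (simp add: sum.reindex case_prod_unfold)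
  also have "\<dots> = (\<Sum>a\<in>UNIV. \<Sum>I | length I = j. f (a # I))"
    by (simp add: sum.cartesian_product)
  finally show ?thesis .
qed

text \<open>The reindexing \<open>(I, \<alpha>) \<mapsto> (I[l := \<alpha>], I ! l)\<close> is an involution of
  \<open>{I. length I = j} \<times> UNIV\<close>.\<close>
lemma sum_lists_update_swap:
  fixes K :: "'a::finite \<Rightarrow> 'a list \<Rightarrow> 'b::comm_monoid_add"
  assumes "l < j"
  shows "(\<Sum>I | length I = j. \<Sum>\<alpha>\<in>UNIV. K (I ! l) (I[l := \<alpha>])) = (\<Sum>J | length J = j. \<Sum>b\<in>UNIV. K b J)"
proof -
  let ?A = "{I::'a list. length I = j} \<times> (UNIV::'a set)"
  let ?h = "\<lambda>(I, \<alpha>). (I[l := \<alpha>], I ! l)"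
  have "bij_betw ?h ?A ?A"
    by (rule bij_betwI[of _ _ _ ?h]) (use assms in \<open>auto simp: case_prod_unfold\<close>)
  then have "(\<Sum>p\<in>?A. (\<lambda>(J, b). K b J) (?h p)) = (\<Sum>p\<in>?A. (\<lambda>(J, b). K b J) p)"
    by (rule sum.reindex_bij_betw)
  then show ?thesis
    by (simp add: sum.cartesian_product case_prod_unfold)
qed

lemma prod_list_map_nth_split:
  fixes f :: "'a \<Rightarrow> 'b::comm_monoid_mult"
  assumes "l < length I"
  shows "prod_list (map f I) = f (I ! l) * prod_list (map f (take l I @ drop (Suc l) I))"
proof -
  have "prod_list (map f (take l I @ I ! l # drop (Suc l) I))
      = f (I ! l) * prod_list (map f (take l I @ drop (Suc l) I))"
    by (simp add: algebra_simps)
  then show ?thesis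
    using id_take_nth_drop[OF assms] by metis
qed

lemma has_real_derivative_prod_list:
  assumes "\<And>i. i \<in> set I \<Longrightarrow> (f i has_real_derivative f' i) (at t within S)"
  shows "((\<lambda>s. prod_list (map (\<lambda>i. f i s) I)) has_real_derivative
    (\<Sum>l<length I. f' (I ! l) * prod_list (map (\<lambda>i. f i t) (take l I @ drop (Suc l) I))))
    (at t within S)"
  using assms
proof (induction I)
  case Nil
  then show ?case
    by simp
next
  case (Cons a I)
  have "((\<lambda>s. f a s * prod_list (map (\<lambda>i. f i s) I)) has_real_derivative
      f' a * prod_list (map (\<lambda>i. f i t) I) +
      f a t * (\<Sum>l<length I. f' (I ! l) * prod_list (map (\<lambda>i. f i t) (take l I @ drop (Suc l) I))))
      (at t within S)"
    using Cons by (auto intro!: derivative_eq_intros)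
  then show ?case
    by (simp del: sum.lessThan_Suc add: sum.lessThan_Suc_shift sum_distrib_left mult_ac)
qed

lemma linear_eq_sum_axis:
  fixes f :: "real^'n \<Rightarrow> real"
  assumes "linear f"
  shows "f v = (\<Sum>a\<in>UNIV. v$a * f (axis a 1))"
proof -
  have "f v = f (\<Sum>a\<in>UNIV. v$a *\<^sub>R axis a 1)"
    using basis_expansion[of v] by (simp add: scalar_mult_eq_scaleR)
  then show ?thesis
    using assms by (simp add: linear_sum linear_cmul)
qed

lemma has_real_derivative_compose_curve:
  fixes f :: "real^'n \<Rightarrow> real"
  assumes "(\<gamma> has_vector_derivative v) (at t)" "f differentiable (at (\<gamma> t))"
  shows "((\<lambda>s. f (\<gamma> s)) has_real_derivative
    (\<Sum>a\<in>UNIV. v$a * frechet_derivative f (at (\<gamma> t)) (axis a 1))) (at t)"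
proof -
  define f' where "f' = frechet_derivative f (at (\<gamma> t))"
  have f': "(f has_derivative f') (at (\<gamma> t))"
    using assms(2) frechet_derivative_works f'_def by blast
  have "((\<lambda>s. f (\<gamma> s)) has_derivative (\<lambda>h. f' (h *\<^sub>R v))) (at t)"
    using has_derivative_compose[OF assms(1)[unfolded has_vector_derivative_def] f'] .
  moreover have "(\<lambda>h. f' (h *\<^sub>R v)) = (*) (\<Sum>a\<in>UNIV. v$a * f' (axis a 1))"
  proof
    fix h
    have "linear f'"
      using f' by (rule has_derivative_linear)
    then show "f' (h *\<^sub>R v) = (\<Sum>a\<in>UNIV. v$a * f' (axis a 1)) * h"
      by (simp add: linear_scale linear_eq_sum_axis[symmetric])
  qed
  ultimately show ?thesis
    by (simp add: has_field_derivative_def f'_def)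
qed

definition tensor_diag :: "nat \<Rightarrow> ('n list \<Rightarrow> real) \<Rightarrow> real^'n \<Rightarrow> real" where
  "tensor_diag j A w = (\<Sum>I | length I = j. A I * prod_list (map (\<lambda>i. w$i) I))"

lemma tensor_diag_0 [simp]: "tensor_diag 0 A w = A []"
proof -
  have "{I::'n list. length I = 0} = {[]}"
    by auto
  then show ?thesis
    by (simp add: tensor_diag_def)
qed

lemma tensor_diag_scaleR:
  fixes w :: "real^'n"
  shows "tensor_diag j A (r *\<^sub>R w) = r ^ j * tensor_diag j A w"
proof -
  have "prod_list (map (\<lambda>i. (r *\<^sub>R w)$i) I) = r ^ length I * prod_list (map (\<lambda>i. w$i) I)"
    for I :: "'n list"
    by (induction I) auto
  then show ?thesis
    by (simp add: tensor_diag_def sum_distrib_left mult_ac)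
qed

lemma sum_lists_update_contract:
  fixes G :: "'n::finite \<Rightarrow> 'n \<Rightarrow> real" and T :: "'n list \<Rightarrow> real" and w :: "real^'n"
  assumes "l < j"
  shows "(\<Sum>I | length I = j. \<Sum>\<alpha>\<in>UNIV. G \<alpha> (I ! l) * T (I[l := \<alpha>]) * prod_list (map (\<lambda>i. w$i) I))
    = (\<Sum>J | length J = j. T J * (\<Sum>b\<in>UNIV. G (J ! l) b * w$b) *
         prod_list (map (\<lambda>i. w$i) (take l J @ drop (Suc l) J)))"
proof -
  define Q where "Q J = prod_list (map (\<lambda>i. w$i) (take l J @ drop (Suc l) J))" for J :: "'n list"
  define K where "K b J = G (J ! l) b * w$b * T J * Q J" for b J
  have "G \<alpha> (I ! l) * T (I[l := \<alpha>]) * prod_list (map (\<lambda>i. w$i) I) = K (I ! l) (I[l := \<alpha>])"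
    if "length I = j" for I \<alpha>
  proof -
    have "prod_list (map (\<lambda>i. w$i) I) = w$(I ! l) * Q I"
      unfolding Q_def by (rule prod_list_map_nth_split) (use assms that in simp)
    moreover have "Q (I[l := \<alpha>]) = Q I"
      by (simp add: Q_def take_update_cancel drop_update_cancel)
    ultimately show ?thesis
      using assms that by (simp add: K_def)
  qed
  then have "(\<Sum>I | length I = j. \<Sum>\<alpha>\<in>UNIV. G \<alpha> (I ! l) * T (I[l := \<alpha>]) * prod_list (map (\<lambda>i. w$i) I))
      = (\<Sum>I | length I = j. \<Sum>\<alpha>\<in>UNIV. K (I ! l) (I[l := \<alpha>]))"
    by simp
  also have "\<dots> = (\<Sum>J | length J = j. \<Sum>b\<in>UNIV. K b J)"
    using assms by (rule sum_lists_update_swap)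
  finally show ?thesis
    by (simp add: K_def Q_def sum_distrib_left sum_distrib_right mult_ac)
qed

lemma tensor_diag_cov_deriv:
  fixes T :: "real^'n \<Rightarrow> 'n list \<Rightarrow> real"
  shows "tensor_diag (Suc j) (cov_deriv T x) w =
    (\<Sum>I | length I = j. (\<Sum>a\<in>UNIV. w$a * frechet_derivative (\<lambda>y. T y I) (at x) (axis a 1)) *
       prod_list (map (\<lambda>i. w$i) I))
    - (\<Sum>l<j. \<Sum>J | length J = j. T x J * (\<Sum>a\<in>UNIV. \<Sum>b\<in>UNIV. christoffel (J ! l) a b x * w$a * w$b) *
       prod_list (map (\<lambda>i. w$i) (take l J @ drop (Suc l) J)))"
proof -
  define W where "W I = prod_list (map (\<lambda>i. w$i) I)" for I :: "'n list"
  define D where "D a I = frechet_derivative (\<lambda>y. T y I) (at x) (axis a 1)" for a I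
  define G where "G \<alpha> b = (\<Sum>a\<in>UNIV. christoffel \<alpha> a b x * w$a)" for \<alpha> b
  have G_contract: "(\<Sum>b\<in>UNIV. G \<alpha> b * w$b)
      = (\<Sum>a\<in>UNIV. \<Sum>b\<in>UNIV. christoffel \<alpha> a b x * w$a * w$b)" for \<alpha>
    unfolding G_def sum_distrib_right by (rule sum.swap)
  have "tensor_diag (Suc j) (cov_deriv T x) w
      = (\<Sum>a\<in>UNIV. \<Sum>I | length I = j. cov_deriv T x (a # I) * W (a # I))"
    unfolding tensor_diag_def W_def by (rule sum_lists_length_Suc)
  also have "\<dots> = (\<Sum>a\<in>UNIV. \<Sum>I | length I = j. w$a * D a I * W I
      - (\<Sum>l<j. \<Sum>\<alpha>\<in>UNIV. w$a * christoffel \<alpha> a (I ! l) x * T x (I[l := \<alpha>]) * W I))"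
    by (intro sum.cong refl)
      (simp add: cov_deriv_def W_def D_def sum_distrib_left sum_distrib_right algebra_simps)
  also have "\<dots> = (\<Sum>I | length I = j. (\<Sum>a\<in>UNIV. w$a * D a I) * W I)
      - (\<Sum>l<j. \<Sum>I | length I = j. \<Sum>\<alpha>\<in>UNIV. G \<alpha> (I ! l) * T x (I[l := \<alpha>]) * W I)"
  proof -
    have "(\<Sum>a\<in>UNIV. \<Sum>I | length I = j. w$a * D a I * W I)
        = (\<Sum>I | length I = j. (\<Sum>a\<in>UNIV. w$a * D a I) * W I)"
      by (subst sum.swap) (simp add: sum_distrib_right)
    moreover have "(\<Sum>a\<in>UNIV. \<Sum>I | length I = j. \<Sum>l<j. \<Sum>\<alpha>\<in>UNIV.
          w$a * christoffel \<alpha> a (I ! l) x * T x (I[l := \<alpha>]) * W I)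
        = (\<Sum>l<j. \<Sum>I | length I = j. \<Sum>\<alpha>\<in>UNIV. G \<alpha> (I ! l) * T x (I[l := \<alpha>]) * W I)"
      unfolding G_def sum_distrib_right
      by (subst sum.swap, subst sum.swap, rule sum.cong[OF refl], subst (2) sum.swap,
          rule sum.cong[OF refl], subst sum.swap) (simp add: mult_ac)
    ultimately show ?thesis
      by (simp add: sum_subtractf)
  qed
  also have "(\<Sum>l<j. \<Sum>I | length I = j. \<Sum>\<alpha>\<in>UNIV. G \<alpha> (I ! l) * T x (I[l := \<alpha>]) * W I)
      = (\<Sum>l<j. \<Sum>J | length J = j. T x J * (\<Sum>b\<in>UNIV. G (J ! l) b * w$b) *
           prod_list (map (\<lambda>i. w$i) (take l J @ drop (Suc l) J)))"
    unfolding W_def by (intro sum.cong refl sum_lists_update_contract) simp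
  finally show ?thesis
    by (simp only: W_def D_def G_contract)
qed

lemma has_real_derivative_tensor_diag_curve:
  fixes T :: "real^'n \<Rightarrow> 'n list \<Rightarrow> real" and \<gamma> w :: "real \<Rightarrow> real^'n"
  assumes \<gamma>: "(\<gamma> has_vector_derivative w t) (at t)"
    and w: "(w has_vector_derivative w') (at t)"
    and T: "\<And>I. (\<lambda>y. T y I) differentiable (at (\<gamma> t))"
  shows "((\<lambda>s. tensor_diag j (T (\<gamma> s)) (w s)) has_real_derivative
    (\<Sum>I | length I = j. (\<Sum>a\<in>UNIV. w t $ a * frechet_derivative (\<lambda>y. T y I) (at (\<gamma> t)) (axis a 1)) *
       prod_list (map (\<lambda>i. w t $ i) I))
    + (\<Sum>l<j. \<Sum>J | length J = j. T (\<gamma> t) J * w' $ (J ! l) *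
       prod_list (map (\<lambda>i. w t $ i) (take l J @ drop (Suc l) J)))) (at t)"
proof -
  define W where "W s I = prod_list (map (\<lambda>i. w s $ i) I)" for s I
  define Q where "Q l I = prod_list (map (\<lambda>i. w t $ i) (take l I @ drop (Suc l) I))" for l I
  define D where "D I = (\<Sum>a\<in>UNIV. w t $ a * frechet_derivative (\<lambda>y. T y I) (at (\<gamma> t)) (axis a 1))"
    for I
  have w_nth: "((\<lambda>s. w s $ i) has_real_derivative w' $ i) (at t)" for i
    using bounded_linear.has_vector_derivative[OF bounded_linear_vec_nth w]
    by (simp add: has_real_derivative_iff_has_vector_derivative)
  have "((\<lambda>s. T (\<gamma> s) I * W s I) has_real_derivative
      D I * W t I + (\<Sum>l<j. w' $ (I ! l) * Q l I) * T (\<gamma> t) I) (at t)" if "length I = j" for I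
  proof -
    have "((\<lambda>s. W s I) has_real_derivative (\<Sum>l<length I. w' $ (I ! l) * Q l I)) (at t)"
      unfolding W_def Q_def by (rule has_real_derivative_prod_list) (rule w_nth)
    then have "((\<lambda>s. W s I) has_real_derivative (\<Sum>l<j. w' $ (I ! l) * Q l I)) (at t)"
      using that by simp
    with has_real_derivative_compose_curve[OF \<gamma> T] show ?thesis
      unfolding D_def by (rule DERIV_mult)
  qed
  then have "((\<lambda>s. tensor_diag j (T (\<gamma> s)) (w s)) has_real_derivative
      (\<Sum>I | length I = j. D I * W t I + (\<Sum>l<j. w' $ (I ! l) * Q l I) * T (\<gamma> t) I)) (at t)"
    unfolding tensor_diag_def W_def by (intro DERIV_sum) auto
  moreover have "(\<Sum>I | length I = j. (\<Sum>l<j. w' $ (I ! l) * Q l I) * T (\<gamma> t) I)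
      = (\<Sum>l<j. \<Sum>J | length J = j. T (\<gamma> t) J * w' $ (J ! l) * Q l J)"
    unfolding sum_distrib_right by (subst sum.swap) (simp add: mult_ac)
  ultimately show ?thesis
    by (simp add: sum.distrib W_def Q_def D_def)
qed

lemma has_real_derivative_tensor_diag_geodesic:
  fixes T :: "real^'n \<Rightarrow> 'n list \<Rightarrow> real" and \<gamma> w :: "real \<Rightarrow> real^'n"
  assumes "(\<gamma> has_vector_derivative w t) (at t)"
    and "(w has_vector_derivative w') (at t)"
    and geodesic: "\<And>\<alpha>. w' $ \<alpha> + (\<Sum>a\<in>UNIV. \<Sum>b\<in>UNIV. christoffel \<alpha> a b (\<gamma> t) * w t $ a * w t $ b) = 0"
    and "\<And>I. (\<lambda>y. T y I) differentiable (at (\<gamma> t))"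
  shows "((\<lambda>s. tensor_diag j (T (\<gamma> s)) (w s)) has_real_derivative
    tensor_diag (Suc j) (cov_deriv T (\<gamma> t)) (w t)) (at t)"
proof -
  have "w' $ \<alpha> = - (\<Sum>a\<in>UNIV. \<Sum>b\<in>UNIV. christoffel \<alpha> a b (\<gamma> t) * w t $ a * w t $ b)" for \<alpha>
    using geodesic[of \<alpha>] by linarith
  then show ?thesis
    using has_real_derivative_tensor_diag_curve[OF assms(1,2,4), of j]
    by (simp add: tensor_diag_cov_deriv sum_negf)
qed

section \<open>Radial geodesics of the Poincare ball\<close>

lemma christoffel_quadratic_form:
  fixes x v :: "real^'n"
  shows "(\<Sum>a\<in>UNIV. \<Sum>b\<in>UNIV. christoffel \<alpha> a b x * v$a * v$b)
    = 2 / (1 - norm x ^ 2) * (2 * (x \<bullet> v) * v$\<alpha> - x$\<alpha> * (v \<bullet> v))"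
proof -
  have "christoffel \<alpha> a b x * v$a * v$b = 2 / (1 - norm x ^ 2) *
      ((if b = \<alpha> then x$a * v$a * v$b else 0) + (if a = \<alpha> then v$a * x$b * v$b else 0)
        - (if a = b then x$\<alpha> * v$a * v$b else 0))" for a b
    by (simp add: christoffel_def algebra_simps)
  moreover have "(\<Sum>a\<in>UNIV. \<Sum>b\<in>UNIV. (if b = \<alpha> then x$a * v$a * v$b else 0)
      + (if a = \<alpha> then v$a * x$b * v$b else 0) - (if a = b then x$\<alpha> * v$a * v$b else 0))
      = 2 * (x \<bullet> v) * v$\<alpha> - x$\<alpha> * (v \<bullet> v)"
  proof -
    have "(\<Sum>a\<in>UNIV. \<Sum>b\<in>UNIV. if b = \<alpha> then x$a * v$a * v$b else 0) = (x \<bullet> v) * v$\<alpha>"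
      by (simp add: inner_vec_def sum_distrib_right)
    moreover have "(\<Sum>a\<in>UNIV. \<Sum>b\<in>UNIV. if a = \<alpha> then v$a * x$b * v$b else 0) = (x \<bullet> v) * v$\<alpha>"
      by (subst sum.swap) (simp add: inner_vec_def sum_distrib_left sum_distrib_right mult_ac)
    moreover have "(\<Sum>a\<in>UNIV. \<Sum>b\<in>UNIV. if a = b then x$\<alpha> * v$a * v$b else 0) = x$\<alpha> * (v \<bullet> v)"
      by (simp add: inner_vec_def sum_distrib_left mult.assoc)
    ultimately show ?thesis
      by (simp add: sum.distrib sum_subtractf)
  qed
  ultimately show ?thesis
    by (simp only: sum_distrib_left[symmetric])
qed

lemma radial_geodesic_equation:
  fixes \<theta> :: "real^'n"
  assumes "norm \<theta> = 1" and "\<bar>\<rho>\<bar> < 1"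
  defines "c \<equiv> (1 - \<rho>\<^sup>2) / 2"
  shows "((- \<rho> * c) *\<^sub>R \<theta>) $ \<alpha> +
    (\<Sum>a\<in>UNIV. \<Sum>b\<in>UNIV. christoffel \<alpha> a b (\<rho> *\<^sub>R \<theta>) * (c *\<^sub>R \<theta>) $ a * (c *\<^sub>R \<theta>) $ b) = 0"
proof -
  have "\<theta> \<bullet> \<theta> = 1"
    using assms(1) by (simp add: norm_eq_1)
  moreover have "\<rho>\<^sup>2 < 1"
    using assms(2) by (simp add: abs_square_less_1)
  ultimately show ?thesis
    unfolding christoffel_quadratic_form using assms(1)
    by (simp add: c_def field_simps power2_eq_square)
qed

lemma has_vector_derivative_radial_geodesic:
  "((\<lambda>s. tanh (s / 2) *\<^sub>R \<theta>) has_vector_derivative ((1 - tanh (t / 2) ^ 2) / 2) *\<^sub>R \<theta>) (at t)"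
  by (auto intro!: derivative_eq_intros)

lemma has_vector_derivative_radial_velocity:
  "((\<lambda>s. ((1 - tanh (s / 2) ^ 2) / 2) *\<^sub>R \<theta>) has_vector_derivative
    (- tanh (t / 2) * ((1 - tanh (t / 2) ^ 2) / 2)) *\<^sub>R \<theta>) (at t)"
proof -
  have "((\<lambda>s. (1 - tanh (s / 2) ^ 2) / 2) has_real_derivative
      - tanh (t / 2) * ((1 - tanh (t / 2) ^ 2) / 2)) (at t)"
    by (auto intro!: derivative_eq_intros simp: field_simps)
  from has_vector_derivative_scaleR[OF this has_vector_derivative_const] show ?thesis
    by simp
qed

lemma tanh_artanh_real:
  fixes r :: real
  assumes "\<bar>r\<bar> < 1"
  shows "tanh (artanh r) = r"
proof -
  have exp_artanh: "exp (- 2 * artanh r) = (1 - r) / (1 + r)"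
    using assms by (simp add: artanh_def exp_minus)
  show ?thesis
    unfolding tanh_real_altdef exp_artanh using assms by (simp add: field_simps)
qed

lemma hd_eq_artanh: "hd x = 2 * artanh (norm x)"
  by (simp add: hd_def artanh_def)

lemma tanh_half_hd:
  assumes "norm x < 1"
  shows "tanh (hd x / 2) = norm x"
  using assms by (simp add: hd_eq_artanh tanh_artanh_real)

lemma hd_pos:
  assumes "x \<noteq> 0" "norm x < 1"
  shows "0 < hd x"
  using tanh_half_hd[OF assms(2)] assms(1) tanh_real_pos_iff[of "hd x / 2"] by simp

lemma hd_radial_geodesic:
  fixes \<theta> :: "real^'n"
  assumes "norm \<theta> = 1" "0 \<le> t"
  shows "hd (tanh (t / 2) *\<^sub>R \<theta>) = t"
  using assms by (simp add: hd_eq_artanh artanh_tanh_real)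

lemma hball_subset_ball: "hball R \<subseteq> ball 0 1"
  by (auto simp: hball_def)

lemma open_hball: "open (hball R :: (real^'n) set)"
proof -
  have "norm x \<in> {-1<..<1}" if "x \<in> ball (0::real^'n) 1" for x
    using that norm_ge_zero[of x] unfolding mem_ball_0 greaterThanLessThan_iff by linarith
  then have "continuous_on (ball 0 1) (\<lambda>x::real^'n. artanh (norm x))"
    by (intro continuous_on_compose2[OF continuous_on_artanh[OF order.refl] continuous_on_norm_id])
      blast
  then have "continuous_on (ball 0 1) (\<lambda>x::real^'n. ereal (hd x))"
    unfolding hd_eq_artanh by (intro continuous_intros)
  then have "open (ball 0 1 \<inter> (\<lambda>x::real^'n. ereal (hd x)) -` {..<R})"
    by (rule continuous_open_preimage) auto
  moreover have "hball R = ball 0 1 \<inter> (\<lambda>x::real^'n. ereal (hd x)) -` {..<R}"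
    by (auto simp: hball_def)
  ultimately show ?thesis
    by simp
qed

lemma open_positive_ereal_less: "open {t::real. 0 < t \<and> ereal t < R}"
proof -
  have "{t. 0 < t \<and> ereal t < R} = {0<..} \<inter> ereal -` {..<R}"
    by auto
  then show ?thesis
    by (simp add: open_Int open_vimage continuous_on_ereal[OF continuous_on_id])
qed

lemma radial_geodesic_in_hball:
  fixes \<theta> :: "real^'n"
  assumes "norm \<theta> = 1" "0 \<le> t" "ereal t < R"
  shows "tanh (t / 2) *\<^sub>R \<theta> \<in> hball R"
  using assms hd_radial_geodesic[OF assms(1,2)] tanh_real_bounds[of "t / 2"]
  by (auto simp: hball_def)

text \<open>The unit-speed geodesic from \<open>0\<close> in the direction of a unit vector \<open>\<theta>\<close> is
  \<open>t \<mapsto> tanh (t/2) \<theta>\<close>, with Euclidean velocity \<open>(1 - tanh (t/2)^2)/2 \<cdot> \<theta>\<close>;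
  \<open>radial_contraction u \<theta> j t\<close> is \<open>\<nabla>^j u\<close> at the geodesic point evaluated on \<open>j\<close> copies
  of this velocity.\<close>
definition radial_contraction :: "(real^'n \<Rightarrow> real) \<Rightarrow> real^'n \<Rightarrow> nat \<Rightarrow> real \<Rightarrow> real" where
  "radial_contraction u \<theta> j t =
     tensor_diag j (cov_nabla j u (tanh (t / 2) *\<^sub>R \<theta>)) (((1 - tanh (t / 2) ^ 2) / 2) *\<^sub>R \<theta>)"

lemma radial_contraction_0: "radial_contraction u \<theta> 0 t = u (tanh (t / 2) *\<^sub>R \<theta>)"
  by (simp add: radial_contraction_def)

lemma has_real_derivative_radial_contraction:
  fixes u :: "real^'n \<Rightarrow> real"
  assumes "smooth_on (hball R) u" "norm \<theta> = 1" "0 \<le> t" "ereal t < R"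
  shows "(radial_contraction u \<theta> j has_real_derivative radial_contraction u \<theta> (Suc j) t) (at t)"
  unfolding radial_contraction_def cov_nabla.simps
proof (rule has_real_derivative_tensor_diag_geodesic[OF has_vector_derivative_radial_geodesic
      has_vector_derivative_radial_velocity])
  have "\<bar>tanh (t / 2)\<bar> < 1"
    using tanh_real_bounds[of "t / 2"] by (simp add: abs_less_iff)
  then show "((- tanh (t / 2) * ((1 - tanh (t / 2) ^ 2) / 2)) *\<^sub>R \<theta>) $ \<alpha> +
      (\<Sum>a\<in>UNIV. \<Sum>b\<in>UNIV. christoffel \<alpha> a b (tanh (t / 2) *\<^sub>R \<theta>) *
        (((1 - tanh (t / 2) ^ 2) / 2) *\<^sub>R \<theta>) $ a * (((1 - tanh (t / 2) ^ 2) / 2) *\<^sub>R \<theta>) $ b) = 0"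
    for \<alpha>
    by (rule radial_geodesic_equation[OF assms(2)])
  show "(\<lambda>y. cov_nabla j u y I) differentiable (at (tanh (t / 2) *\<^sub>R \<theta>))" for I
    using smooth_on_cov_nabla[OF open_hball hball_subset_ball assms(1)]
      radial_geodesic_in_hball[OF assms(2-4)]
    by (rule smooth_on_imp_differentiable_at[OF open_hball])
qed

lemma radial_contraction_at_point:
  fixes x :: "real^'n"
  assumes "x \<noteq> 0" "norm x < 1"
  shows "radial_contraction u ((1 / norm x) *\<^sub>R x) j (hd x) =
    ((1 - norm x ^ 2) / 2) ^ j *
    (\<Sum>is | length is = j. cov_nabla j u x is * prod_list (map (\<lambda>i. x$i) is) / norm x ^ j)"
proof -
  have "radial_contraction u ((1 / norm x) *\<^sub>R x) j (hd x) =
      ((1 - norm x ^ 2) / (2 * norm x)) ^ j * tensor_diag j (cov_nabla j u x) x"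
    using assms by (simp add: radial_contraction_def tanh_half_hd tensor_diag_scaleR)
  then show ?thesis
    by (simp add: tensor_diag_def sum_distrib_left sum_divide_distrib power_divide
        power_mult_distrib mult_ac)
qed

theorem lemma3p1:
  fixes R :: ereal and u :: "real^'n \<Rightarrow> real" and v :: "real \<Rightarrow> real"
  assumes "R > 0"
    and "smooth_on (hball R) u"
    and "\<forall>x\<in>hball R. u x = v (hd x)"
  shows "smooth_on {t. 0 < t \<and> ereal t < R} v \<and>
    (\<forall>j::nat. \<forall>x\<in>hball R - {0}.
       (deriv ^^ j) v (hd x) =
         ((1 - norm x ^ 2) / 2) ^ j *
         (\<Sum>is | length is = j. cov_nabla j u x is * prod_list (map (\<lambda>i. x$i) is) / norm x ^ j))"
proof -
  define U where "U = {t. 0 < t \<and> ereal t < R}"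
  have U: "open U"
    unfolding U_def by (rule open_positive_ereal_less)
  have v_eq: "radial_contraction u \<theta> 0 t = v t" if "norm \<theta> = 1" "t \<in> U" for \<theta> t
    using that assms(3) radial_geodesic_in_hball[OF that(1)] hd_radial_geodesic[OF that(1)]
    by (simp add: U_def radial_contraction_0)
  have v_deriv:
    "(radial_contraction u \<theta> j has_real_derivative radial_contraction u \<theta> (Suc j) t) (at t)"
    if "norm \<theta> = 1" "t \<in> U" for \<theta> j t
    using that has_real_derivative_radial_contraction[OF assms(2)] by (simp add: U_def)
  obtain \<theta> :: "real^'n" where "norm \<theta> = 1"
    using vector_choose_size[of 1] by auto
  then have "smooth_on U v"
    by (intro smooth_on_if_derivative_chain[OF U v_eq v_deriv])
  moreover have "(deriv ^^ j) v (hd x) = radial_contraction u ((1 / norm x) *\<^sub>R x) j (hd x)"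
    if "x \<in> hball R - {0}" for j x
  proof -
    have unit: "norm ((1 / norm x) *\<^sub>R x) = 1" and "hd x \<in> U"
      using that hd_pos[of x] by (auto simp: U_def hball_def)
    then show ?thesis
      by (intro higher_deriv_eq_if_derivative_chain[OF U v_eq[OF unit] v_deriv[OF unit]])
  qed
  ultimately show ?thesis
    by (auto simp: U_def hball_def radial_contraction_at_point)
qed

end
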